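(* Let $G=A_n$ be the alternating group with $n\ge 5$, and let $p$ be an odd prime dividing $|G|$. Then $d_{p'}(G)\le 1/(p-1)$. Furthermore, equality holds if and only if $p=5$ and $n=5$ (i.e. $G=A_5\cong\mathrm{PSL}_2(5)$).
   Context: For a finite group $G$ and prime $p$, $k_{p'}(G)$ denotes the number of conjugacy classes of elements of $G$ whose order is not divisible by $p$, $|G|_{p'}$ is the largest divisor of $|G|$ coprime to $p$, and $d_{p'}(G)=k_{p'}(G)/|G|_{p'}$. *)

theory Defs
  imports "HOL-Algebra.Algebra" "HOL-Computational_Algebra.Primes"
begin

definition conj_class :: "('a, 'b) monoid_scheme \<Rightarrow> 'a \<Rightarrow> 'a set" where
  "conj_class G x = {g \<otimes>\<^bsub>G\<^esub> x \<otimes>\<^bsub>G\<^esub> inv\<^bsub>G\<^esub> g | g. g \<in> carrier G}"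

definition p_regular :: "('a, 'b) monoid_scheme \<Rightarrow> nat \<Rightarrow> 'a \<Rightarrow> bool" where
  "p_regular G p x \<longleftrightarrow> x \<in> carrier G \<and> \<not> p dvd group.ord G x"

definition k_p' :: "('a, 'b) monoid_scheme \<Rightarrow> nat \<Rightarrow> nat" where
  "k_p' G p = card {conj_class G x | x. p_regular G p x}"

definition order_p' :: "('a, 'b) monoid_scheme \<Rightarrow> nat \<Rightarrow> nat" where
  "order_p' G p = Max {d. d dvd order G \<and> coprime d p}"

definition d_p' :: "('a, 'b) monoid_scheme \<Rightarrow> nat \<Rightarrow> real" where
  "d_p' G p = real (k_p' G p) / real (order_p' G p)"

end

(* A p-regular element of A_n is conjugate in S_n to the standard permutation of its cycle type, a
   partition of n with no part divisible by p and an even number of even parts. The S_n-class of an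
   even permutation r consists of at most two A_n-classes, those of r and (1 2) r (1 2), and of one
   unless the centralizer of r in S_n is even. So k_{p'}(A_n) is at most twice the number of these
   partitions, hence at most 2^(n+1). On the other hand |A_n|_{p'} is at least half the product of
   the k <= n not divisible by p, which exceeds 4 * 2^n * n from n = 11 on; this gives
   k_{p'}(A_n) (p - 1) < |A_n|_{p'} for n >= 11, and for 5 <= n <= 10 the partitions are counted.
   For n = p = 5 the three classes of 1, (1 2)(3 4) and (1 2 3) do not split and |A_5|_{5'} = 12,
   which gives equality. *)

theory Submission
  imports Defs
begin

section \<open>Products of disjoint cycles\<close>

definition cycles_prod :: "'a list list \<Rightarrow> 'a \<Rightarrow> 'a" where
  "cycles_prod css = foldr (\<lambda>cs f. cycle_of_list cs \<circ> f) css id"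

lemma cycles_prod_Nil [simp]: "cycles_prod [] = id"
  by (simp add: cycles_prod_def)

lemma cycles_prod_Cons [simp]: "cycles_prod (cs # css) = cycle_of_list cs \<circ> cycles_prod css"
  by (simp add: cycles_prod_def)

lemma cycle_of_list_in_set: "x \<in> set cs \<Longrightarrow> cycle_of_list cs x \<in> set cs"
  by (metis cycle_permutes permutes_in_image)

lemma cycles_prod_outside: "x \<notin> set (concat css) \<Longrightarrow> cycles_prod css x = x"
  by (induction css) (auto simp: id_outside_supp)

lemma cycles_prod_apply:
  assumes "distinct (concat css)" "cs \<in> set css" "x \<in> set cs"
  shows "cycles_prod css x = cycle_of_list cs x"
  using assms
proof (induction css)
  case (Cons c css)
  show ?case
  proof (cases "cs = c")
    case True
    then have "x \<notin> set (concat css)" using Cons.prems by auto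
    then show ?thesis using True by (simp add: cycles_prod_outside)
  next
    case False
    then have "cs \<in> set css" using Cons.prems by auto
    then have "cycles_prod css x = cycle_of_list cs x" using Cons by auto
    moreover have "cycle_of_list cs x \<notin> set c"
      using cycle_of_list_in_set[OF Cons.prems(3)] \<open>cs \<in> set css\<close> Cons.prems(1) by auto
    ultimately show ?thesis by (simp add: id_outside_supp)
  qed
qed simp

lemma cycles_prod_cong_set:
  assumes "distinct (concat css)" "distinct (concat css')" "set css = set css'"
  shows "cycles_prod css = cycles_prod css'"
proof
  fix x
  show "cycles_prod css x = cycles_prod css' x"
  proof (cases "x \<in> set (concat css)")
    case True
    then obtain cs where "cs \<in> set css" "x \<in> set cs" by auto
    then show ?thesis using cycles_prod_apply assms by metis
  next
    case False
    then have "x \<notin> set (concat css')" using assms(3) by auto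
    then show ?thesis using False by (simp add: cycles_prod_outside)
  qed
qed

lemma funpow_cycles_prod_apply:
  assumes "distinct (concat css)" "cs \<in> set css" "x \<in> set cs"
  shows "(cycles_prod css ^^ m) x = (cycle_of_list cs ^^ m) x"
proof (induction m)
  case (Suc m)
  have "(cycle_of_list cs ^^ m) x \<in> set cs"
    by (induction m) (auto simp: assms(3) cycle_of_list_in_set)
  then show ?case using Suc cycles_prod_apply[OF assms(1,2)] by simp
qed simp

lemma length_dvd_if_cycle_funpow_fixes_hd:
  assumes "distinct cs" "cs \<noteq> []" "(cycle_of_list cs ^^ m) (hd cs) = hd cs"
  shows "length cs dvd m"
proof -
  have "(cycle_of_list cs ^^ m) (cs ! 0) = rotate m cs ! 0"
    using cyclic_rotation[OF assms(1), of m] assms(2) by (metis length_greater_0_conv nth_map)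
  also have "\<dots> = cs ! (m mod length cs)"
    using assms(2) by (simp add: nth_rotate)
  finally have "cs ! (m mod length cs) = cs ! 0"
    using assms(2,3) by (simp add: hd_conv_nth)
  then have "m mod length cs = 0"
    using assms(1,2) nth_eq_iff_index_eq by (metis length_greater_0_conv mod_less_divisor)
  then show ?thesis by auto
qed

lemma length_dvd_if_cycles_prod_funpow_eq_id:
  assumes "distinct (concat css)" "cs \<in> set css" "cs \<noteq> []" "cycles_prod css ^^ m = id"
  shows "length cs dvd m"
proof (rule length_dvd_if_cycle_funpow_fixes_hd)
  show "distinct cs" using assms(1,2) by (simp add: distinct_concat_iff)
  show "(cycle_of_list cs ^^ m) (hd cs) = hd cs"
    using funpow_cycles_prod_apply[OF assms(1,2), of "hd cs" m] assms(3,4) by simp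
qed (use assms(3) in simp)

lemma swapidseq_ext_cycles_prod:
  assumes "distinct (concat css)"
  shows "swapidseq_ext (set (concat css)) (\<Sum>cs\<leftarrow>css. length cs - 1) (cycles_prod css)"
  using assms
proof (induction css)
  case Nil
  then show ?case using swapidseq_ext.empty by (simp add: id_def)
next
  case (Cons cs css)
  have "swapidseq_ext (set cs \<union> set (concat css)) ((length cs - 1) + (\<Sum>cs\<leftarrow>css. length cs - 1))
          (cycle_of_list cs \<circ> cycles_prod css)"
    by (rule swapidseq_ext_extension) (use Cons swapidseq_ext_of_cycles in auto)
  then show ?case by (simp del: comp_apply)
qed

lemma evenperm_cycles_prod:
  assumes "distinct (concat css)"
  shows "evenperm (cycles_prod css) \<longleftrightarrow> even (\<Sum>cs\<leftarrow>css. length cs - 1)"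
  using evenperm_unique swapidseq_ext_imp_swapidseq swapidseq_ext_cycles_prod[OF assms] by blast

lemma cycles_prod_conj:
  assumes "bij g" "distinct (concat css)"
  shows "g \<circ> cycles_prod css \<circ> inv' g = cycles_prod (map (map g) css)"
  using assms(2)
proof (induction css)
  case Nil
  then show ?case using assms(1) by (simp add: fun_eq_iff bij_inv_eq_iff bij_is_surj surj_f_inv_f)
next
  case (Cons cs css)
  have "inv' g \<circ> g = id" using assms(1) bij_is_inj inv_o_cancel by blast
  then have "g \<circ> cycles_prod (cs # css) \<circ> inv' g
             = (g \<circ> cycle_of_list cs \<circ> inv' g) \<circ> (g \<circ> cycles_prod css \<circ> inv' g)"
    by (simp add: fun_eq_iff)
  also have "\<dots> = cycle_of_list (map g cs) \<circ> cycles_prod (map (map g) css)"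
    using Cons conjugation_of_cycle[OF _ assms(1), of cs] by (auto simp del: comp_apply)
  finally show ?case by (simp del: comp_apply)
qed

lemma cycle_decomp_imp_cycles_prod:
  assumes "cycle_decomp S \<sigma>"
  shows "\<exists>css. distinct (concat css) \<and> set (concat css) = S \<and> [] \<notin> set css \<and> \<sigma> = cycles_prod css"
  using assms
proof induction
  case empty
  then show ?case by (intro exI[of _ "[]"]) auto
next
  case (comp I \<sigma> cs)
  then obtain css where "distinct (concat css)" "set (concat css) = I" "[] \<notin> set css" "\<sigma> = cycles_prod css"
    by blast
  with comp show ?case
    by (cases "cs = []") (auto intro!: exI[of _ css] exI[of _ "cs # css"])
qed

lemma permutes_eq_cycles_prod_sorted:
  assumes "\<sigma> permutes S" "finite S"
  obtains css where "distinct (concat css)" "set (concat css) = S" "[] \<notin> set css"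
    "\<sigma> = cycles_prod css" "sorted_wrt (\<ge>) (map length css)"
proof -
  obtain css where css: "distinct (concat css)" "set (concat css) = S" "[] \<notin> set css"
    "\<sigma> = cycles_prod css"
    using cycle_decomp_imp_cycles_prod[OF cycle_decomposition[OF assms]] by auto
  define css' where "css' = rev (sort_key length css)"
  have set_css': "set css' = set css" by (simp add: css'_def)
  have "distinct css" using css(1,3) distinct_concat_iff[of css] by (simp add: removeAll_id)
  then have "distinct (concat css')"
    using css(1,3) unfolding distinct_concat_iff by (simp add: css'_def removeAll_id distinct_sort)
  moreover have "sorted_wrt (\<ge>) (map length css')"
    using sorted_sort_key[of length css] by (simp add: css'_def rev_map[symmetric] sorted_wrt_rev)
  moreover have "\<sigma> = cycles_prod css'"
    using cycles_prod_cong_set[OF css(1) calculation(1) set_css'[symmetric]] css(4) by simp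
  ultimately show thesis using that css(2,3) set_css' by (metis set_concat)
qed

lemma funpow_conj:
  assumes "bij h"
  shows "(h \<circ> f \<circ> inv' h) ^^ m = h \<circ> f ^^ m \<circ> inv' h"
proof (induction m)
  case 0
  then show ?case using assms by (simp add: fun_eq_iff bij_is_surj surj_f_inv_f)
next
  case (Suc m)
  then show ?case using assms by (simp add: fun_eq_iff bij_is_inj inv_f_f)
qed

section \<open>Cycle types\<close>

fun blocks :: "nat \<Rightarrow> nat list \<Rightarrow> nat list list" where
  "blocks s [] = []"
| "blocks s (k # ks) = [s..<s + k] # blocks (s + k) ks"

definition standard_perm :: "nat list \<Rightarrow> nat \<Rightarrow> nat" where
  "standard_perm ks = cycles_prod (blocks 1 ks)"

lemma concat_blocks: "concat (blocks s ks) = [s..<s + sum_list ks]"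
proof (induction ks arbitrary: s)
  case (Cons k ks)
  have "[s..<s + k] @ [s + k..<s + k + sum_list ks] = [s..<s + k + sum_list ks]"
    by (rule upt_add_eq_append[symmetric]) simp
  with Cons show ?case by (simp add: add.assoc)
qed simp

lemma map_length_blocks: "map length (blocks s ks) = ks"
  by (induction ks arbitrary: s) auto

lemma blocks_eq_relabel:
  assumes "\<And>i. i < length (concat css) \<Longrightarrow> g (concat css ! i) = s + i"
  shows "map (map g) css = blocks s (map length css)"
  using assms
proof (induction css arbitrary: s)
  case (Cons cs css)
  have "map g cs = [s..<s + length cs]"
  proof (rule nth_equalityI)
    fix i assume "i < length (map g cs)"
    with Cons.prems[of i] show "map g cs ! i = [s..<s + length cs] ! i"
      by (simp add: nth_append)
  qed simp
  moreover have "map (map g) css = blocks (s + length cs) (map length css)"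
  proof (rule Cons.IH)
    fix i assume "i < length (concat css)"
    with Cons.prems[of "length cs + i"] show "g (concat css ! i) = s + length cs + i"
      by (simp add: nth_append)
  qed
  ultimately show ?case by simp
qed simp

lemma evenperm_standard_perm: "evenperm (standard_perm ks) \<longleftrightarrow> even (\<Sum>k\<leftarrow>ks. k - 1)"
proof -
  have "(\<Sum>cs\<leftarrow>blocks 1 ks. length cs - 1) = (\<Sum>k\<leftarrow>map length (blocks 1 ks). k - 1)"
    by (simp add: comp_def)
  then show ?thesis
    using evenperm_cycles_prod[of "blocks 1 ks"]
    by (simp add: standard_perm_def concat_blocks map_length_blocks)
qed

lemma dvd_if_standard_perm_funpow_eq_id:
  assumes "standard_perm ks ^^ m = id" "k \<in> set ks" "k > 0"
  shows "k dvd m"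
proof -
  obtain cs where "cs \<in> set (blocks 1 ks)" "length cs = k"
    using assms(2) map_length_blocks[of 1 ks] by (metis imageE list.set_map)
  then show ?thesis
    using length_dvd_if_cycles_prod_funpow_eq_id[of "blocks 1 ks" cs m] assms
    by (auto simp: standard_perm_def concat_blocks)
qed

lemma relabelling_permutation_exists:
  assumes "distinct ws" "set ws = {1..n}"
  obtains g where "g permutes {1..n}" "\<And>i. i < length ws \<Longrightarrow> g (ws ! i) = 1 + i"
proof -
  have len: "length ws = n" using distinct_card[OF assms(1)] assms(2) by simp
  have nth_bij: "bij_betw ((!) ws) {..<n} {1..n}"
    using bij_betw_nth[OF assms(1)] assms(2) len by simp
  have Suc_bij: "bij_betw Suc {..<n} {1..n}"
    by (simp add: bij_betw_def inj_on_def image_Suc_lessThan atLeastAtMostSuc_conv)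
  define g where "g x = (if x \<in> {1..n} then Suc (inv_into {..<n} ((!) ws) x) else x)" for x
  have "bij_betw (Suc \<circ> inv_into {..<n} ((!) ws)) {1..n} {1..n}"
    using bij_betw_trans[OF bij_betw_inv_into[OF nth_bij] Suc_bij] .
  then have "bij_betw g {1..n} {1..n}"
    by (rule bij_betw_cong[THEN iffD1, rotated]) (simp add: g_def)
  then have "g permutes {1..n}" by (rule bij_imp_permutes) (auto simp add: g_def)
  moreover have "g (ws ! i) = 1 + i" if "i < length ws" for i
  proof -
    have "ws ! i \<in> {1..n}" using that assms(2) nth_mem by blast
    moreover have "inv_into {..<n} ((!) ws) (ws ! i) = i"
      using nth_bij that len by (simp add: bij_betw_def inv_into_f_f)
    ultimately show ?thesis by (simp add: g_def)
  qed
  ultimately show thesis using that by blast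
qed

function partitions :: "nat \<Rightarrow> nat \<Rightarrow> nat list list" where
  "partitions n m = (if n = 0 then [[]]
     else concat (map (\<lambda>k. map ((#) k) (partitions (n - k) k)) [1..<Suc (min m n)]))"
  by auto
termination by (relation "measure fst") auto

declare partitions.simps [simp del]

lemma mem_partitions:
  assumes "sorted_wrt (\<ge>) ks" "0 \<notin> set ks" "\<forall>k\<in>set ks. k \<le> m" "sum_list ks = n"
  shows "ks \<in> set (partitions n m)"
  using assms
proof (induction ks arbitrary: n m)
  case Nil
  then show ?case by (simp add: partitions.simps)
next
  case (Cons k ks)
  have "ks \<in> set (partitions (n - k) k)"
    using Cons.prems by (intro Cons.IH) auto
  moreover have "1 \<le> k" "k \<le> m" "k \<le> n" "n \<noteq> 0" using Cons.prems by auto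
  ultimately show ?case by (subst partitions.simps) force
qed

lemma length_partitions_le: "length (partitions n m) \<le> 2 ^ n"
proof (induction n arbitrary: m rule: less_induct)
  case (less n)
  show ?case
  proof (cases "n = 0")
    case False
    have "length (partitions n m) = (\<Sum>k\<leftarrow>[1..<Suc (min m n)]. length (partitions (n - k) k))"
      using False by (subst partitions.simps) (simp add: length_concat comp_def)
    also have "\<dots> = (\<Sum>k=1..<Suc (min m n). length (partitions (n - k) k))"
      by (simp only: interv_sum_list_conv_sum_set_nat set_upt)
    also have "\<dots> \<le> (\<Sum>k=1..<Suc (min m n). (2::nat) ^ (n - k))"
      by (rule sum_mono) (use less False in auto)
    also have "\<dots> \<le> (\<Sum>k<n. (2::nat) ^ k)"
    proof -
      have "(\<Sum>k=1..<Suc (min m n). (2::nat) ^ (n - k)) \<le> (\<Sum>k=1..n. 2 ^ (n - k))"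
        by (rule sum_mono2) auto
      also have "\<dots> = (\<Sum>k<n. 2 ^ k)"
        by (rule sum.reindex_bij_witness[of _ "\<lambda>k. n - k" "\<lambda>k. n - k"]) auto
      finally show ?thesis .
    qed
    also have "\<dots> < 2 ^ n"
      using lessThan_atLeast0 sum_power2 by simp
    finally show ?thesis by simp
  qed (simp add: partitions.simps)
qed

lemma pos_of_mem_partitions: "ks \<in> set (partitions n m) \<Longrightarrow> k \<in> set ks \<Longrightarrow> 0 < k"
proof (induction n m arbitrary: ks rule: partitions.induct)
  case (1 n m)
  show ?case
  proof (cases "n = 0")
    case False
    have "ks \<in> set (concat (map (\<lambda>j. map ((#) j) (partitions (n - j) j)) [1..<Suc (min m n)]))"
      using "1.prems"(1) unfolding partitions.simps[of n m] if_not_P[OF False] .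
    then obtain j ks' where "j \<in> set [1..<Suc (min m n)]" "ks' \<in> set (partitions (n - j) j)"
      "ks = j # ks'"
      by (auto simp del: upt_Suc)
    with "1.IH"[of j ks'] "1.prems"(2) False show ?thesis by auto
  qed (use "1.prems" in \<open>simp add: partitions.simps\<close>)
qed

lemma permutes_conj_standard_perm:
  assumes "\<sigma> permutes {1..n}"
  obtains ks h where "ks \<in> set (partitions n n)" "h permutes {1..n}" "\<sigma> = h \<circ> standard_perm ks \<circ> inv' h"
proof -
  obtain css where css: "distinct (concat css)" "set (concat css) = {1..n}" "[] \<notin> set css"
    "\<sigma> = cycles_prod css" "sorted_wrt (\<ge>) (map length css)"
    using permutes_eq_cycles_prod_sorted[OF assms] by blast
  obtain g where g: "g permutes {1..n}" "\<And>i. i < length (concat css) \<Longrightarrow> g (concat css ! i) = 1 + i"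
    using relabelling_permutation_exists[OF css(1,2)] by blast
  let ?ks = "map length css"
  have "bij g" using g(1) permutes_bij by blast
  have "g \<circ> \<sigma> \<circ> inv' g = standard_perm ?ks"
    using cycles_prod_conj[OF \<open>bij g\<close> css(1)] blocks_eq_relabel[of css g 1] g(2) css(4)
    by (simp add: standard_perm_def)
  moreover have "inv' g \<circ> (g \<circ> \<sigma> \<circ> inv' g) \<circ> g = \<sigma>"
    using \<open>bij g\<close> by (simp add: fun_eq_iff bij_is_inj bij_is_surj inv_f_f surj_f_inv_f)
  ultimately have "\<sigma> = inv' g \<circ> standard_perm ?ks \<circ> inv' (inv' g)"
    using inv_inv_eq[OF \<open>bij g\<close>] by simp
  moreover have "?ks \<in> set (partitions n n)"
  proof (rule mem_partitions)
    show "sum_list ?ks = n"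
      using distinct_card[OF css(1)] css(2) by (simp add: length_concat)
    then show "\<forall>k\<in>set ?ks. k \<le> n" using member_le_sum_list by blast
  qed (use css(3,5) in auto)
  ultimately show thesis using that permutes_inv[OF g(1)] by blast
qed

lemma (in group) inv_mult_cancel_left:
  "x \<in> carrier G \<Longrightarrow> y \<in> carrier G \<Longrightarrow> inv x \<otimes> (x \<otimes> y) = y"
  by (simp add: m_assoc[symmetric])

lemma (in group) conj_pow:
  assumes "g \<in> carrier G" "x \<in> carrier G"
  shows "(g \<otimes> x \<otimes> inv g) [^] (m::nat) = g \<otimes> x [^] m \<otimes> inv g"
  using assms by (induction m) (simp_all add: m_assoc inv_mult_cancel_left)

lemma (in group) conj_class_conj_subset:
  assumes "x \<in> carrier G" "h \<in> carrier G"
  shows "conj_class G (h \<otimes> x \<otimes> inv h) \<subseteq> conj_class G x"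
proof
  fix y assume "y \<in> conj_class G (h \<otimes> x \<otimes> inv h)"
  then obtain g where g: "g \<in> carrier G" "y = g \<otimes> (h \<otimes> x \<otimes> inv h) \<otimes> inv g"
    unfolding conj_class_def by blast
  then have "y = (g \<otimes> h) \<otimes> x \<otimes> inv (g \<otimes> h)"
    using assms by (simp add: inv_mult_group m_assoc)
  then show "y \<in> conj_class G x" unfolding conj_class_def using g(1) assms(2) by blast
qed

lemma (in group) conj_class_conj:
  assumes "x \<in> carrier G" "h \<in> carrier G"
  shows "conj_class G (h \<otimes> x \<otimes> inv h) = conj_class G x"
proof
  have "x = inv h \<otimes> (h \<otimes> x \<otimes> inv h) \<otimes> inv (inv h)"
    using assms by (simp add: m_assoc inv_mult_cancel_left)
  then show "conj_class G x \<subseteq> conj_class G (h \<otimes> x \<otimes> inv h)"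
    using conj_class_conj_subset[of "h \<otimes> x \<otimes> inv h" "inv h"] assms by simp
qed (rule conj_class_conj_subset[OF assms])

lemma (in group) conj_class_self:
  assumes "x \<in> carrier G" shows "x \<in> conj_class G x"
proof -
  have "x = \<one> \<otimes> x \<otimes> inv \<one>" using assms by simp
  then show ?thesis unfolding conj_class_def by blast
qed

lemma (in group) conj_class_one: "conj_class G \<one> = {\<one>}"
  using conj_class_self[OF one_closed] by (auto simp: conj_class_def)

lemma (in group) pow_eq_one_if_mem_conj_class:
  assumes "x \<in> carrier G" "x [^] (m::nat) = \<one>" "y \<in> conj_class G x"
  shows "y [^] m = \<one>"
  using assms conj_pow by (auto simp: conj_class_def)

lemma (in group) p_regular_if_pow_eq_one:
  assumes "x \<in> carrier G" "x [^] (m::nat) = \<one>" "\<not> p dvd m"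
  shows "p_regular G p x"
proof -
  have "ord x dvd m" using assms(1,2) pow_eq_id by blast
  with assms(1,3) show ?thesis unfolding p_regular_def using dvd_trans by blast
qed

lemma card_le_k_p':
  assumes "finite (carrier G)" "C \<subseteq> {conj_class G x | x. p_regular G p x}"
  shows "card C \<le> k_p' G p"
proof -
  have "{conj_class G x | x. p_regular G p x} \<subseteq> conj_class G ` carrier G"
    unfolding p_regular_def by blast
  with assms(1) have "finite {conj_class G x | x. p_regular G p x}"
    using finite_subset by blast
  then show ?thesis
    unfolding k_p'_def using assms(2) by (rule card_mono)
qed

section \<open>Conjugacy classes of the alternating group\<close>

lemma finite_carrier_alt_group: "finite (carrier (alt_group n))"
  using finite_permutations[of "{1..n}"] by (rule finite_subset[rotated]) (auto simp: alt_group_carrier)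

lemma alt_group_pow: "x [^]\<^bsub>alt_group n\<^esub> (m::nat) = x ^^ m"
  by (induction m) (simp_all add: alt_group_one alt_group_mult funpow_swap1)

lemma alt_group_conj:
  assumes "h \<in> carrier (alt_group n)"
  shows "h \<otimes>\<^bsub>alt_group n\<^esub> x \<otimes>\<^bsub>alt_group n\<^esub> inv\<^bsub>alt_group n\<^esub> h = h \<circ> x \<circ> inv' h"
  using assms by (simp add: alt_group_inv_equality alt_group_mult)

lemma evenperm_conj:
  assumes "permutation h" "permutation x"
  shows "evenperm (h \<circ> x \<circ> inv' h) \<longleftrightarrow> evenperm x"
  using assms permutation_inverse[OF assms(1)]
  by (simp add: evenperm_comp evenperm_inv permutation_compose) blast

lemma conj_in_alt_group:
  assumes "h permutes {1..n}" "r \<in> carrier (alt_group n)"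
  shows "h \<circ> r \<circ> inv' h \<in> carrier (alt_group n)"
  using assms evenperm_conj[of h r] permutation_permutes
  by (simp add: alt_group_carrier permutes_compose permutes_inv) blast

lemma conj_class_alt_group_conj_eq:
  assumes "r \<in> carrier (alt_group n)" "g permutes {1..n}" "h permutes {1..n}"
    "evenperm g \<longleftrightarrow> evenperm h"
  shows "conj_class (alt_group n) (g \<circ> r \<circ> inv' g) = conj_class (alt_group n) (h \<circ> r \<circ> inv' h)"
proof -
  let ?k = "g \<circ> inv' h" and ?s = "h \<circ> r \<circ> inv' h"
  have perms: "permutation g" "permutation h" "permutation (inv' h)"
    using assms permutation_permutes permutes_inv by blast+
  have k_carrier: "?k \<in> carrier (alt_group n)"
    using assms perms by (simp add: alt_group_carrier permutes_compose permutes_inv evenperm_comp evenperm_inv)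
  have s_carrier: "?s \<in> carrier (alt_group n)"
    using conj_in_alt_group[OF assms(3,1)] .
  have "bij g" "bij h" using assms(2,3) permutes_bij by blast+
  then have "inv' ?k = h \<circ> inv' g"
    by (simp add: o_inv_distrib bij_imp_bij_inv inv_inv_eq)
  with \<open>bij h\<close> have "?k \<circ> ?s \<circ> inv' ?k = g \<circ> r \<circ> inv' g"
    by (simp add: fun_eq_iff bij_is_inj inv_f_f)
  then show ?thesis
    using group.conj_class_conj[OF alt_group_is_group s_carrier k_carrier] alt_group_conj[OF k_carrier]
    by simp
qed

(* Only if this holds can the S_n-class of r split into two A_n-classes. *)
definition centralizer_in_alt_group :: "nat \<Rightarrow> (nat \<Rightarrow> nat) \<Rightarrow> bool" where
  "centralizer_in_alt_group n r \<longleftrightarrow> (\<forall>\<tau>. \<tau> permutes {1..n} \<and> \<tau> \<circ> r = r \<circ> \<tau> \<longrightarrow> evenperm \<tau>)"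

lemma conj_class_alt_group_cases:
  assumes "n \<ge> 2" "r \<in> carrier (alt_group n)" "h permutes {1..n}"
  shows "conj_class (alt_group n) (h \<circ> r \<circ> inv' h) = conj_class (alt_group n) r
    \<or> centralizer_in_alt_group n r \<and>
      conj_class (alt_group n) (h \<circ> r \<circ> inv' h)
        = conj_class (alt_group n) (transpose 1 2 \<circ> r \<circ> transpose 1 2)"
proof (cases "evenperm h")
  case True
  then show ?thesis
    using conj_class_alt_group_conj_eq[OF assms(2,3) permutes_id] by simp
next
  case odd_h: False
  show ?thesis
  proof (cases "centralizer_in_alt_group n r")
    case False
    then obtain \<tau> where \<tau>: "\<tau> permutes {1..n}" "\<tau> \<circ> r = r \<circ> \<tau>" "\<not> evenperm \<tau>"
      unfolding centralizer_in_alt_group_def by blast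
    then have "\<tau> \<circ> r \<circ> inv' \<tau> = r \<circ> (\<tau> \<circ> inv' \<tau>)"
      by (simp add: comp_assoc)
    also have "\<dots> = r"
      using permutes_inv_o(1)[OF \<tau>(1)] by simp
    finally have "\<tau> \<circ> r \<circ> inv' \<tau> = r" .
    then show ?thesis
      using conj_class_alt_group_conj_eq[OF assms(2,3) \<tau>(1)] odd_h \<tau>(3) by simp
  next
    case True
    have "transpose 1 2 permutes {1..n}" "\<not> evenperm (transpose (1::nat) 2)"
      using assms(1) by (auto intro: permutes_swap_id simp: evenperm_swap)
    from conj_class_alt_group_conj_eq[OF assms(2,3) this(1)] this(2) odd_h
    have "conj_class (alt_group n) (h \<circ> r \<circ> inv' h)
            = conj_class (alt_group n) (transpose 1 2 \<circ> r \<circ> transpose 1 2)"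
      by simp
    with True show ?thesis by blast
  qed
qed

lemma transpose_comp_transpose_in_alt_group:
  assumes "a \<in> {1..n}" "b \<in> {1..n}" "c \<in> {1..n}" "d \<in> {1..n}" "a \<noteq> b" "c \<noteq> d"
  shows "transpose a b \<circ> transpose c d \<in> carrier (alt_group n)"
  unfolding alt_group_carrier using assms
  by (simp add: permutes_compose permutes_swap_id evenperm_comp permutation_swap_id evenperm_swap)

definition even_regular_types :: "nat \<Rightarrow> nat \<Rightarrow> nat list list" where
  "even_regular_types n p =
     filter (\<lambda>ks. even (\<Sum>k\<leftarrow>ks. k - 1) \<and> (\<forall>k\<in>set ks. \<not> p dvd k)) (partitions n n)"

lemma p_regular_alt_group_conj_standard_perm:
  assumes "p_regular (alt_group n) p x"
  obtains ks h where "ks \<in> set (even_regular_types n p)" "h permutes {1..n}"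
    "x = h \<circ> standard_perm ks \<circ> inv' h" "standard_perm ks \<in> carrier (alt_group n)"
proof -
  have x: "x \<in> carrier (alt_group n)" "\<not> p dvd group.ord (alt_group n) x"
    using assms by (auto simp: p_regular_def)
  then have "x permutes {1..n}" by (simp add: alt_group_carrier)
  then obtain ks h where ks: "ks \<in> set (partitions n n)" and h: "h permutes {1..n}"
    and x_eq: "x = h \<circ> standard_perm ks \<circ> inv' h"
    by (rule permutes_conj_standard_perm)
  let ?h' = "inv' h"
  have h': "?h' permutes {1..n}" "bij ?h'" "inv' ?h' = h"
    using h permutes_inv permutes_bij inv_inv_eq by blast+
  have std_eq: "standard_perm ks = ?h' \<circ> x \<circ> inv' ?h'"
    using x_eq permutes_bij[OF h] by (simp add: h'(3) fun_eq_iff bij_is_inj bij_is_surj inv_f_f surj_f_inv_f)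
  have std_carrier: "standard_perm ks \<in> carrier (alt_group n)"
    unfolding std_eq using h'(1) x(1) by (rule conj_in_alt_group)
  let ?m = "group.ord (alt_group n) x"
  have "x ^^ ?m = id"
    using group.pow_ord_eq_1[OF alt_group_is_group x(1)] by (simp add: alt_group_pow alt_group_one)
  then have "standard_perm ks ^^ ?m = id"
    unfolding std_eq funpow_conj[OF h'(2)] using permutes_inv_o(1)[OF h'(1)] by simp
  have "\<not> p dvd k" if "k \<in> set ks" for k
  proof
    assume "p dvd k"
    also have "k dvd ?m"
      using \<open>standard_perm ks ^^ ?m = id\<close> that pos_of_mem_partitions[OF ks that]
      by (rule dvd_if_standard_perm_funpow_eq_id)
    finally show False using x(2) by contradiction
  qed
  moreover have "even (\<Sum>k\<leftarrow>ks. k - 1)"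
    using std_carrier by (simp add: alt_group_carrier evenperm_standard_perm)
  ultimately have "ks \<in> set (even_regular_types n p)"
    using ks by (simp add: even_regular_types_def)
  then show thesis using h x_eq std_carrier by (rule that)
qed

lemma k_p'_alt_group_le:
  assumes "n \<ge> 2"
  shows "k_p' (alt_group n) p \<le> length (even_regular_types n p)
    + card {ks \<in> set (even_regular_types n p). centralizer_in_alt_group n (standard_perm ks)}"
proof -
  let ?A = "alt_group n" and ?T = "set (even_regular_types n p)"
  let ?S = "{ks \<in> ?T. centralizer_in_alt_group n (standard_perm ks)}"
  let ?class = "\<lambda>ks. conj_class ?A (standard_perm ks)"
  let ?class' = "\<lambda>ks. conj_class ?A (transpose 1 2 \<circ> standard_perm ks \<circ> transpose 1 2)"
  have class_mem: "conj_class ?A x \<in> ?class ` ?T \<union> ?class' ` ?S" if "p_regular ?A p x" for x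
  proof -
    from that obtain ks h where ks: "ks \<in> ?T" and h: "h permutes {1..n}"
      and x_eq: "x = h \<circ> standard_perm ks \<circ> inv' h" and std: "standard_perm ks \<in> carrier ?A"
      by (rule p_regular_alt_group_conj_standard_perm)
    have "conj_class ?A x = ?class ks
        \<or> centralizer_in_alt_group n (standard_perm ks) \<and> conj_class ?A x = ?class' ks"
      unfolding x_eq by (rule conj_class_alt_group_cases[OF assms std h])
    then show ?thesis
    proof (elim disjE conjE)
      assume eq: "conj_class ?A x = ?class ks"
      show ?thesis
        unfolding eq by (rule UnI1) (rule imageI[OF ks])
    next
      assume "centralizer_in_alt_group n (standard_perm ks)" and eq: "conj_class ?A x = ?class' ks"
      with ks have "ks \<in> ?S" by simp
      then show ?thesis
        unfolding eq by (rule UnI2[OF imageI])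
    qed
  qed
  have "k_p' ?A p \<le> card (?class ` ?T \<union> ?class' ` ?S)"
    unfolding k_p'_def using class_mem by (intro card_mono) auto
  also have "\<dots> \<le> card (?class ` ?T) + card (?class' ` ?S)"
    by (rule card_Un_le)
  also have "\<dots> \<le> card ?T + card ?S"
    by (intro add_mono card_image_le) auto
  also have "card ?T \<le> length (even_regular_types n p)"
    by (rule card_length)
  finally show ?thesis by simp
qed

lemma k_p'_alt_group_le_twice:
  assumes "n \<ge> 2"
  shows "k_p' (alt_group n) p \<le> 2 * length (even_regular_types n p)"
proof -
  let ?T = "even_regular_types n p"
  have "card {ks \<in> set ?T. centralizer_in_alt_group n (standard_perm ks)} \<le> card (set ?T)"
    by (rule card_mono) auto
  also have "\<dots> \<le> length ?T"
    by (rule card_length)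
  finally show ?thesis
    using k_p'_alt_group_le[OF assms, of p] by simp
qed

lemma not_centralizer_in_alt_group:
  assumes "a \<in> {1..n}" "b \<in> {1..n}" "a \<noteq> b" "transpose a b \<circ> r = r \<circ> transpose a b"
  shows "\<not> centralizer_in_alt_group n r"
  using assms permutes_swap_id[of a "{1..n}" b] evenperm_swap[of a b]
  unfolding centralizer_in_alt_group_def by blast

section \<open>The \<open>p'\<close>-part of the order\<close>

lemma le_order_p':
  assumes "order G > 0" "d dvd order G" "coprime d p"
  shows "d \<le> order_p' G p"
  unfolding order_p'_def
proof (rule Max_ge)
  show "finite {d. d dvd order G \<and> coprime d p}"
    using finite_divisors_nat[OF assms(1)] by (rule finite_subset[rotated]) auto
qed (use assms in auto)

(* For prime p a divisor of the p'-part of n!, but smaller in general, since the multiples of p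
   are dropped entirely. *)
definition fact_coprime :: "nat \<Rightarrow> nat \<Rightarrow> nat" where
  "fact_coprime p n = prod_list (filter (\<lambda>k. \<not> p dvd k) [1..<Suc n])"

lemma fact_coprime_0 [simp]: "fact_coprime p 0 = 1"
  by (simp add: fact_coprime_def)

lemma fact_coprime_Suc [simp]:
  "fact_coprime p (Suc n) = (if p dvd Suc n then 1 else Suc n) * fact_coprime p n"
  by (simp add: fact_coprime_def)

lemma fact_coprime_numeral:
  "fact_coprime p (numeral k) = (if p dvd numeral k then 1 else numeral k) * fact_coprime p (pred_numeral k)"
  by (simp add: numeral_eq_Suc)

lemma fact_coprime_dvd_fact: "fact_coprime p n dvd fact n"
proof (induction n)
  case (Suc n)
  have "(if p dvd Suc n then 1 else Suc n) * fact_coprime p n dvd Suc n * fact n"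
    by (rule mult_dvd_mono) (use Suc in auto)
  then show ?case by (simp only: fact_coprime_Suc fact_Suc of_nat_id)
qed simp

lemma coprime_fact_coprime: "Factorial_Ring.prime p \<Longrightarrow> coprime (fact_coprime p n) p"
  by (induction n) (auto simp: coprime_commute prime_imp_coprime)

lemma fact_coprime_dvd_mono: "m \<le> n \<Longrightarrow> fact_coprime p m dvd fact_coprime p n"
  by (induction n rule: dec_induct) auto

lemma fact_coprime_eq_fact: "n < p \<Longrightarrow> fact_coprime p n = fact n"
  by (induction n) (auto dest: dvd_imp_le)

lemma even_fact_coprime:
  assumes "n \<ge> 2" "\<not> p dvd 2"
  shows "even (fact_coprime p n)"
proof -
  have "fact_coprime p 2 = 2"
    using assms(2) by (simp add: numeral_2_eq_2)
  then show ?thesis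
    using fact_coprime_dvd_mono[OF assms(1), of p] by (metis dvd_trans)
qed

lemma fact_coprime_add_two_ge:
  assumes "p \<ge> 2"
  shows "(n + 1) * fact_coprime p n \<le> fact_coprime p (n + 2)"
proof -
  have "\<not> (p dvd n + 1 \<and> p dvd n + 2)"
    using assms dvd_diff_nat[of p "n + 2" "n + 1"] by auto
  then show ?thesis
    by (cases "p dvd n + 1"; cases "p dvd n + 2") (auto simp: numeral_2_eq_2)
qed

lemma fact_coprime_ge_base:
  assumes "p \<ge> 3" "n \<in> {11, 12}"
  shows "4 * 2 ^ n * n \<le> fact_coprime p n"
proof (cases "p < 13")
  case True
  have "list_all (\<lambda>p. 4 * 2 ^ 11 * 11 \<le> fact_coprime p 11 \<and> 4 * 2 ^ 12 * 12 \<le> fact_coprime p 12)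
    [3..<13]"
    by (simp add: fact_coprime_numeral upt_rec)
  moreover have "p \<in> set [3..<13]" unfolding set_upt using True assms(1) by simp
  ultimately have "4 * 2 ^ 11 * 11 \<le> fact_coprime p 11 \<and> 4 * 2 ^ 12 * 12 \<le> fact_coprime p 12"
    unfolding list_all_iff by blast
  with assms(2) show ?thesis by auto
next
  case False
  with assms show ?thesis by (auto simp: fact_coprime_eq_fact fact_numeral)
qed

lemma fact_coprime_ge:
  assumes "n \<ge> 11" "p \<ge> 3"
  shows "4 * 2 ^ n * n \<le> fact_coprime p n"
  using assms(1)
proof (induction n rule: less_induct)
  case (less n)
  show ?case
  proof (cases "n \<le> 12")
    case True
    with less.prems have "n \<in> {11, 12}" by auto
    then show ?thesis by (rule fact_coprime_ge_base[OF assms(2)])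
  next
    case False
    define m where "m = n - 2"
    have n: "n = m + 2" "m \<ge> 11" using False m_def by auto
    have "4 * 2 ^ n * n = 4 * 2 ^ m * (4 * (m + 2))"
      by (simp add: n power_add algebra_simps)
    also have "\<dots> \<le> 4 * 2 ^ m * (m * (m + 1))"
    proof -
      have "4 * (m + 2) \<le> 11 * (m + 1)" by simp
      also have "\<dots> \<le> m * (m + 1)" using n(2) by (rule mult_le_mono1)
      finally show ?thesis by simp
    qed
    also have "\<dots> = (m + 1) * (4 * 2 ^ m * m)"
      by (simp add: algebra_simps)
    also have "\<dots> \<le> (m + 1) * fact_coprime p m"
      using less.IH[of m] n by (intro mult_le_mono2) simp
    also have "\<dots> \<le> fact_coprime p n"
      using fact_coprime_add_two_ge[of p m] assms(2) n(1) by simp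
    finally show ?thesis .
  qed
qed

lemma order_alt_group: "n \<ge> 2 \<Longrightarrow> 2 * order (alt_group n) = fact n"
  unfolding order_def by (rule alt_group_card_carrier)

lemma prime_le_if_dvd_order_alt_group:
  assumes "n \<ge> 2" "Factorial_Ring.prime p" "p dvd order (alt_group n)"
  shows "p \<le> n"
proof -
  have "p dvd fact n"
    using assms(3) order_alt_group[OF assms(1)] by (metis dvd_mult)
  then show ?thesis
    using prime_dvd_fact_iff assms(2) by blast
qed

lemma order_p'_alt_group_ge:
  assumes "n \<ge> 2" "Factorial_Ring.prime p" "p \<noteq> 2"
  shows "fact_coprime p n div 2 \<le> order_p' (alt_group n) p"
proof -
  have "\<not> p dvd 2"
    using assms(2,3) prime_ge_2_nat[of p] dvd_imp_le[of p 2] by auto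
  then obtain r where r: "fact_coprime p n = 2 * r"
    using even_fact_coprime[OF assms(1)] by blast
  obtain q where "fact n = fact_coprime p n * q"
    using fact_coprime_dvd_fact by blast
  with r order_alt_group[OF assms(1)] have "order (alt_group n) = r * q"
    by simp
  moreover have "coprime r p"
    using coprime_fact_coprime[OF assms(2), of n] r by simp
  moreover have "order (alt_group n) > 0"
    using order_alt_group[OF assms(1)] by (metis fact_gt_zero mult_zero_right neq0_conv)
  ultimately have "r \<le> order_p' (alt_group n) p"
    by (intro le_order_p') simp_all
  with r show ?thesis by simp
qed

(* For n <= 10 the bound 2^n on the number of partitions is too weak, so the cycle types are
   counted. *)
lemma length_even_regular_types_small:
  "length (even_regular_types 5 3) = 3"
  "length (even_regular_types 6 3) = 4" "length (even_regular_types 6 5) = 5"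
  "length (even_regular_types 7 3) = 5" "length (even_regular_types 7 5) = 7"
  "length (even_regular_types 7 7) = 7"
  "length (even_regular_types 8 3) = 7" "length (even_regular_types 8 5) = 10"
  "length (even_regular_types 8 7) = 11"
  "length (even_regular_types 9 3) = 8" "length (even_regular_types 9 5) = 13"
  "length (even_regular_types 9 7) = 15" "length (even_regular_types 9 9) = 15"
  "length (even_regular_types 10 3) = 11" "length (even_regular_types 10 5) = 18"
  "length (even_regular_types 10 7) = 20" "length (even_regular_types 10 9) = 21"
  by code_simp+

lemma two_length_even_regular_types_less_small:
  assumes "5 \<le> n" "n \<le> 10" "3 \<le> p" "odd p" "p \<le> n" "(n, p) \<noteq> (5, 5)"
  shows "2 * length (even_regular_types n p) * (p - 1) < fact_coprime p n div 2"
proof -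
  have "n = 5 \<or> n = 6 \<or> n = 7 \<or> n = 8 \<or> n = 9 \<or> n = 10" "p = 3 \<or> p = 5 \<or> p = 7 \<or> p = 9"
    using assms(1-5) by presburger+
  then show ?thesis
    using assms(5,6)
    by (elim disjE) (simp_all add: length_even_regular_types_small fact_coprime_numeral)
qed

lemma two_length_even_regular_types_less:
  assumes "5 \<le> n" "3 \<le> p" "odd p" "p \<le> n" "(n, p) \<noteq> (5, 5)"
  shows "2 * length (even_regular_types n p) * (p - 1) < fact_coprime p n div 2"
proof (cases "n \<le> 10")
  case False
  have "length (even_regular_types n p) \<le> 2 ^ n"
    unfolding even_regular_types_def using length_filter_le length_partitions_le order_trans by blast
  then have "2 * length (even_regular_types n p) * (p - 1) \<le> 2 * 2 ^ n * (p - 1)"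
    by simp
  also have "\<dots> < 2 * 2 ^ n * n"
    using assms(2,4) by simp
  also have "\<dots> = (4 * 2 ^ n * n) div 2"
    by simp
  also have "\<dots> \<le> fact_coprime p n div 2"
    using False assms(2) by (intro div_le_mono fact_coprime_ge) simp_all
  finally show ?thesis .
qed (use assms two_length_even_regular_types_less_small in auto)

lemma k_p'_alt_group_mult_less:
  assumes "n \<ge> 5" "Factorial_Ring.prime p" "odd p" "p dvd order (alt_group n)" "(n, p) \<noteq> (5, 5)"
  shows "k_p' (alt_group n) p * (p - 1) < order_p' (alt_group n) p"
proof -
  have "p \<ge> 2" "p \<noteq> 2"
    using assms(2,3) prime_ge_2_nat by auto
  then have "p \<ge> 3" by linarith
  have "p \<le> n"
    using prime_le_if_dvd_order_alt_group assms(1,2,4) by simp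
  have "k_p' (alt_group n) p * (p - 1) \<le> 2 * length (even_regular_types n p) * (p - 1)"
    using k_p'_alt_group_le_twice[of n p] assms(1) by simp
  also have "\<dots> < fact_coprime p n div 2"
    using two_length_even_regular_types_less assms(1,3,5) \<open>p \<ge> 3\<close> \<open>p \<le> n\<close> by blast
  also have "\<dots> \<le> order_p' (alt_group n) p"
    using order_p'_alt_group_ge assms(1,2) \<open>p \<ge> 3\<close> by simp
  finally show ?thesis .
qed

section \<open>The alternating group of degree 5\<close>

lemma order_p'_alt_group_5_5: "order_p' (alt_group 5) 5 = 12"
proof -
  have "2 * order (alt_group 5) = fact 5"
    by (rule order_alt_group) simp
  then have order: "order (alt_group 5) = 5 * 12"
    by (simp add: fact_numeral)
  have "Max {d. d dvd 5 * 12 \<and> coprime d (5::nat)} = 12"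
  proof (rule Max_eqI)
    show "finite {d. d dvd 5 * 12 \<and> coprime d (5::nat)}"
      using finite_divisors_nat[of "5 * 12"] by (rule finite_subset[rotated]) auto
    show "d \<le> 12" if "d \<in> {d. d dvd 5 * 12 \<and> coprime d (5::nat)}" for d
      using that coprime_dvd_mult_right_iff[of d 5 12] by (auto dest: dvd_imp_le)
    show "12 \<in> {d. d dvd 5 * 12 \<and> coprime d (5::nat)}"
      by (simp add: coprime_iff_gcd_eq_1 gcd_non_0_nat)
  qed
  then show ?thesis by (simp add: order_p'_def order)
qed

lemma even_regular_types_5_5: "even_regular_types 5 5 = [[1, 1, 1, 1, 1], [2, 2, 1], [3, 1, 1]]"
  by code_simp

lemma standard_perm_1_1_1_1_1: "standard_perm [1, 1, 1, 1, 1] = id"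
  by (simp add: standard_perm_def upt_conv_Cons fun_eq_iff eval_nat_numeral)

lemma standard_perm_2_2_1: "standard_perm [2, 2, 1] = transpose 1 2 \<circ> transpose 3 4"
  by (simp add: standard_perm_def upt_conv_Cons fun_eq_iff eval_nat_numeral)

lemma standard_perm_3_1_1: "standard_perm [3, 1, 1] = transpose 1 2 \<circ> transpose 2 3"
  by (simp add: standard_perm_def upt_conv_Cons fun_eq_iff eval_nat_numeral)

lemma k_p'_alt_group_5_5_le: "k_p' (alt_group 5) 5 \<le> 3"
proof -
  have "\<not> centralizer_in_alt_group 5 (standard_perm ks)" if "ks \<in> set (even_regular_types 5 5)" for ks
  proof -
    from that have "ks = [1, 1, 1, 1, 1] \<or> ks = [2, 2, 1] \<or> ks = [3, 1, 1]"
      by (simp add: even_regular_types_5_5)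
    then show ?thesis
    proof (elim disjE)
      assume ks: "ks = [1, 1, 1, 1, 1]"
      show ?thesis
        unfolding ks standard_perm_1_1_1_1_1 by (rule not_centralizer_in_alt_group[of 1 _ 2]) simp_all
    next
      assume ks: "ks = [2, 2, 1]"
      show ?thesis
        unfolding ks standard_perm_2_2_1
        by (rule not_centralizer_in_alt_group[of 1 _ 2]) (auto simp: fun_eq_iff transpose_def)
    next
      assume ks: "ks = [3, 1, 1]"
      show ?thesis
        unfolding ks standard_perm_3_1_1
        by (rule not_centralizer_in_alt_group[of 4 _ 5]) (auto simp: fun_eq_iff transpose_def)
    qed
  qed
  then have no_split: "{ks \<in> set (even_regular_types 5 5). centralizer_in_alt_group 5 (standard_perm ks)} = {}"
    by blast
  have "k_p' (alt_group 5) 5 \<le> length (even_regular_types 5 5)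
      + card {ks \<in> set (even_regular_types 5 5). centralizer_in_alt_group 5 (standard_perm ks)}"
    by (rule k_p'_alt_group_le) simp
  then show ?thesis
    unfolding no_split by (simp add: even_regular_types_5_5)
qed

lemma k_p'_alt_group_5_5_ge: "k_p' (alt_group 5) 5 \<ge> 3"
proof -
  let ?A = "alt_group 5"
  define a :: "nat \<Rightarrow> nat" where "a = transpose 1 2 \<circ> transpose 3 4"
  define b :: "nat \<Rightarrow> nat" where "b = transpose 1 2 \<circ> transpose 2 3"
  have G: "group ?A" by (rule alt_group_is_group)
  have carrier: "a \<in> carrier ?A" "b \<in> carrier ?A" "id \<in> carrier ?A"
    unfolding a_def b_def
    by (rule transpose_comp_transpose_in_alt_group; simp)+ (simp add: alt_group_carrier)
  have a_pow: "a [^]\<^bsub>?A\<^esub> (2::nat) = id" and b_pow: "b [^]\<^bsub>?A\<^esub> (3::nat) = id"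
    unfolding alt_group_pow by (auto simp: a_def b_def fun_eq_iff transpose_def eval_nat_numeral)
  have "b [^]\<^bsub>?A\<^esub> (2::nat) \<noteq> id"
    unfolding alt_group_pow by (auto simp: b_def fun_eq_iff transpose_def eval_nat_numeral)
  have "a \<noteq> id" "b \<noteq> id"
    by (auto simp: a_def b_def fun_eq_iff transpose_def)
  have "conj_class ?A id = {id}"
    using group.conj_class_one[OF G] by (simp add: alt_group_one)
  moreover have "a \<in> conj_class ?A a" "b \<in> conj_class ?A b"
    using group.conj_class_self[OF G] carrier by blast+
  moreover have "b \<notin> conj_class ?A a"
    using group.pow_eq_one_if_mem_conj_class[OF G carrier(1)] a_pow \<open>b [^]\<^bsub>?A\<^esub> (2::nat) \<noteq> id\<close>
    by (auto simp: alt_group_one)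
  ultimately have three_classes: "card {conj_class ?A id, conj_class ?A a, conj_class ?A b} = 3"
    using \<open>a \<noteq> id\<close> \<open>b \<noteq> id\<close> by (auto simp: card_insert_if)
  have "p_regular ?A 5 a"
    by (rule group.p_regular_if_pow_eq_one[OF G carrier(1), where m = 2]) (simp_all add: a_pow alt_group_one)
  moreover have "p_regular ?A 5 b"
    by (rule group.p_regular_if_pow_eq_one[OF G carrier(2), where m = 3]) (simp_all add: b_pow alt_group_one)
  moreover have "p_regular ?A 5 id"
    by (rule group.p_regular_if_pow_eq_one[OF G carrier(3), where m = 1])
      (simp_all add: alt_group_pow alt_group_one alt_group_mult)
  ultimately have "{conj_class ?A id, conj_class ?A a, conj_class ?A b} \<subseteq> {conj_class ?A x | x. p_regular ?A 5 x}"
    by blast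
  from card_le_k_p'[OF finite_carrier_alt_group this] three_classes show ?thesis
    by simp
qed

theorem proposition3p4:
  fixes n p :: nat
  assumes "n \<ge> 5" and "Factorial_Ring.prime p" and "odd p" and "p dvd order (alt_group n)"
  shows "d_p' (alt_group n) p \<le> 1 / (real p - 1)
         \<and> (d_p' (alt_group n) p = 1 / (real p - 1) \<longleftrightarrow> p = 5 \<and> n = 5)"
proof (cases "(n, p) = (5, 5)")
  case True
  then show ?thesis
    using k_p'_alt_group_5_5_le k_p'_alt_group_5_5_ge
    by (simp add: d_p'_def order_p'_alt_group_5_5)
next
  case False
  let ?k = "k_p' (alt_group n) p" and ?o = "order_p' (alt_group n) p"
  have less: "?k * (p - 1) < ?o"
    using k_p'_alt_group_mult_less[OF assms False] .
  have "p \<ge> 2"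
    using assms(2) by (rule prime_ge_2_nat)
  then have "real (?k * (p - 1)) = real ?k * (real p - 1)"
    by (simp add: of_nat_diff)
  with less have "real ?k * (real p - 1) < real ?o"
    by (metis of_nat_less_iff)
  with \<open>p \<ge> 2\<close> have "d_p' (alt_group n) p < 1 / (real p - 1)"
    unfolding d_p'_def by (simp add: divide_simps mult.commute)
  with False show ?thesis by auto
qed

end
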